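(* Let $X\subseteq\mathbb{R}^m$, $f:X\to\mathbb{R}^d$ with $a_{i0}\le f_i(x)\le a_{in}$ on $X$, and $\phi:\mathbb{R}^d\to\mathbb{R}$ multilinear, $\phi(s_{1n},\dots,s_{dn})=\sum_{I\in\mathcal{I}}c_I\prod_{i\in I}s_{in}$ with $\mathcal{I}$ a collection of subsets of $[d]$ and $c_I\in\mathbb{R}$. Let $u:X\to\mathbb{R}^{d\times(n+1)}$ be convex with $u_{i0}(x)=a_{i0}$, $u_{in}(x)=f_i(x)$, $u_{ij}(x)\le\min\{f_i(x),a_{ij}\}$ ($j\in[n-1]$), and $W$ a convex set containing $\{(x,f(x))\mid x\in X\}$. Then, identifying $f$ with $s_{\cdot n}=(s_{1n},\dots,s_{dn})$, the set $\{(\mu,w,s,\delta)\mid(\mu,w,s)\text{ satisfies (HQ)},\ (Z(s),\delta)\text{ satisfies (Inc-1)}\}$ is an ideal formulation of $\bigcup_{H\in\mathcal{H}}\operatorname{conv}\bigl(\{(f,\phi(f))\mid f\in H\}\bigr)$, and adding $u(x)\le s$ and $(x,s_{\cdot n})\in W$ yields an MICP relaxation of the graph of $\phi\circ f$.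
   Context: $d,n\ge1$, $[k]=\{1,\dots,k\}$, $E=\{0,\dots,n\}^d$; $a\in\mathbb{R}^{d\times(n+1)}$ with $a_{i0}<\dots<a_{in}$; integers $0=\tau(i,0)<\dots<\tau(i,l_i)=n$; $\mathcal{H}=\{\prod_i[a_{i\tau(i,t_i-1)},a_{i\tau(i,t_i)}]\mid t_i\in[l_i]\}$. $\Delta_i=\{z_i\in\mathbb{R}^{n+1}\mid1=z_{i0}\ge\dots\ge z_{in}\ge0\}$. (Inc-1): $z_i\in\Delta_i$, $\delta_{it}\in\{0,1\}$, $z_{i\tau(i,t)}\ge\delta_{it}\ge z_{i\tau(i,t)+1}$. $Z(s)_{i0}=1$, $Z(s)_{ij}=(s_{ij}-s_{i,j-1})/(a_{ij}-a_{i,j-1})$. $v_{ij}\in\mathbb{R}^{n+1}$ has $k$-th component $a_{i,\min\{k,j\}}$. System (HQ) in $(\mu,w,s)$, $w=(w_p)_{p\in E}$: $\mu=\sum_{I\in\mathcal{I}}c_I\sum_{p\in E}(\prod_{i\in I}a_{ip_i})w_p$, $w\ge0$, $\sum_{p\in E}w_p=1$, $s_i=\sum_{j=0}^nv_{ij}\sum_{p\in E:p_i=j}w_p$ for $i\in[d]$. Ideal formulation: projection onto $(f,\mu)$ equals the target set and every extreme point of the continuous relaxation has binary $\delta$. MICP relaxation of the graph: its projection onto $(x,\mu)$ contains $\{(x,\phi(f(x)))\mid x\in X\}$ and its continuous relaxation is convex. *)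

theory Defs
  imports "HOL-Analysis.Analysis" "HOL-Library.Function_Algebras"
begin

instantiation "fun" :: (type, real_vector) real_vector
begin
definition scaleR_fun :: "real \<Rightarrow> ('a \<Rightarrow> 'b) \<Rightarrow> 'a \<Rightarrow> 'b"
  where "scaleR_fun r f = (\<lambda>x. r *\<^sub>R f x)"
instance
  by standard (auto simp: scaleR_fun_def fun_eq_iff scaleR_add_right scaleR_add_left)
end


text \<open>Indices: i ranges over [d] = {1..d}, j over {0..n}. Vectors indexed by [d] or
  by [d] x {0..n} are encoded as functions that vanish outside the index range.\<close>

definition gridE :: "nat \<Rightarrow> nat \<Rightarrow> (nat \<Rightarrow> nat) set" where
  "gridE d n = {p. (\<forall>i\<in>{1..d}. p i \<le> n) \<and> (\<forall>i. i \<notin> {1..d} \<longrightarrow> p i = 0)}"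

definition mlin :: "nat set set \<Rightarrow> (nat set \<Rightarrow> real) \<Rightarrow> (nat \<Rightarrow> real) \<Rightarrow> real" where
  "mlin II c g = (\<Sum>I\<in>II. c I * (\<Prod>i\<in>I. g i))"

definition boxesH :: "nat \<Rightarrow> (nat \<Rightarrow> nat \<Rightarrow> real) \<Rightarrow> (nat \<Rightarrow> nat \<Rightarrow> nat) \<Rightarrow> (nat \<Rightarrow> nat)
    \<Rightarrow> (nat \<Rightarrow> real) set set" where
  "boxesH d a tau l =
     {{g. (\<forall>i\<in>{1..d}. a i (tau i (t i - 1)) \<le> g i \<and> g i \<le> a i (tau i (t i)))
          \<and> (\<forall>i. i \<notin> {1..d} \<longrightarrow> g i = 0)}
      | t. \<forall>i\<in>{1..d}. t i \<in> {1..l i}}"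

definition target_set :: "nat \<Rightarrow> (nat \<Rightarrow> nat \<Rightarrow> real) \<Rightarrow> (nat \<Rightarrow> nat \<Rightarrow> nat) \<Rightarrow> (nat \<Rightarrow> nat)
    \<Rightarrow> nat set set \<Rightarrow> (nat set \<Rightarrow> real) \<Rightarrow> ((nat \<Rightarrow> real) \<times> real) set" where
  "target_set d a tau l II c =
     (\<Union>H\<in>boxesH d a tau l. convex hull {(g, mlin II c g) | g. g \<in> H})"

definition HQ :: "nat \<Rightarrow> nat \<Rightarrow> (nat \<Rightarrow> nat \<Rightarrow> real) \<Rightarrow> nat set set \<Rightarrow> (nat set \<Rightarrow> real)
    \<Rightarrow> real \<Rightarrow> ((nat \<Rightarrow> nat) \<Rightarrow> real) \<Rightarrow> (nat \<Rightarrow> nat \<Rightarrow> real) \<Rightarrow> bool" where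
  "HQ d n a II c mu w s \<longleftrightarrow>
     mu = (\<Sum>I\<in>II. c I * (\<Sum>p\<in>gridE d n. (\<Prod>i\<in>I. a i (p i)) * w p))
     \<and> (\<forall>p\<in>gridE d n. 0 \<le> w p)
     \<and> (\<Sum>p\<in>gridE d n. w p) = 1
     \<and> (\<forall>i\<in>{1..d}. \<forall>k\<in>{0..n}.
          s i k = (\<Sum>j=0..n. a i (min k j) * (\<Sum>p\<in>{p\<in>gridE d n. p i = j}. w p)))"

definition Zmap :: "(nat \<Rightarrow> nat \<Rightarrow> real) \<Rightarrow> (nat \<Rightarrow> nat \<Rightarrow> real) \<Rightarrow> nat \<Rightarrow> nat \<Rightarrow> real" where
  "Zmap a s i j = (if j = 0 then 1 else (s i j - s i (j - 1)) / (a i j - a i (j - 1)))"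

text \<open>System (Inc-1) in (z, delta); if relaxed, delta in {0,1} is replaced by 0 <= delta <= 1.
  The index t ranges over [l_i - 1] (so that z_{i,tau(i,t)+1} is defined).\<close>
definition Inc1 :: "bool \<Rightarrow> nat \<Rightarrow> nat \<Rightarrow> (nat \<Rightarrow> nat \<Rightarrow> nat) \<Rightarrow> (nat \<Rightarrow> nat)
    \<Rightarrow> (nat \<Rightarrow> nat \<Rightarrow> real) \<Rightarrow> (nat \<Rightarrow> nat \<Rightarrow> real) \<Rightarrow> bool" where
  "Inc1 relaxed d n tau l z delta \<longleftrightarrow>
     (\<forall>i\<in>{1..d}.
        z i 0 = 1 \<and> (\<forall>j\<in>{1..n}. z i j \<le> z i (j - 1)) \<and> 0 \<le> z i n
        \<and> (\<forall>t\<in>{1..l i - 1}.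
             (if relaxed then 0 \<le> delta i t \<and> delta i t \<le> 1 else delta i t \<in> {0, 1})
             \<and> delta i t \<le> z i (tau i t) \<and> z i (tau i t + 1) \<le> delta i t))"

definition var_support :: "nat \<Rightarrow> nat \<Rightarrow> (nat \<Rightarrow> nat)
    \<Rightarrow> ((nat \<Rightarrow> nat) \<Rightarrow> real) \<Rightarrow> (nat \<Rightarrow> nat \<Rightarrow> real) \<Rightarrow> (nat \<Rightarrow> nat \<Rightarrow> real) \<Rightarrow> bool" where
  "var_support d n l w s delta \<longleftrightarrow>
     (\<forall>p. p \<notin> gridE d n \<longrightarrow> w p = 0)
     \<and> (\<forall>i k. \<not> (i \<in> {1..d} \<and> k \<le> n) \<longrightarrow> s i k = 0)
     \<and> (\<forall>i t. \<not> (i \<in> {1..d} \<and> t \<in> {1..l i - 1}) \<longrightarrow> delta i t = 0)"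

definition formulation :: "bool \<Rightarrow> nat \<Rightarrow> nat \<Rightarrow> (nat \<Rightarrow> nat \<Rightarrow> real) \<Rightarrow> (nat \<Rightarrow> nat \<Rightarrow> nat)
    \<Rightarrow> (nat \<Rightarrow> nat) \<Rightarrow> nat set set \<Rightarrow> (nat set \<Rightarrow> real)
    \<Rightarrow> (real \<times> ((nat \<Rightarrow> nat) \<Rightarrow> real) \<times> (nat \<Rightarrow> nat \<Rightarrow> real) \<times> (nat \<Rightarrow> nat \<Rightarrow> real)) set" where
  "formulation relaxed d n a tau l II c =
     {(mu, w, s, delta). HQ d n a II c mu w s \<and> Inc1 relaxed d n tau l (Zmap a s) delta
        \<and> var_support d n l w s delta}"

definition delta_binary :: "nat \<Rightarrow> (nat \<Rightarrow> nat) \<Rightarrow> (nat \<Rightarrow> nat \<Rightarrow> real) \<Rightarrow> bool" where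
  "delta_binary d l delta \<longleftrightarrow> (\<forall>i\<in>{1..d}. \<forall>t\<in>{1..l i - 1}. delta i t \<in> {0, 1})"

text \<open>Ideal formulation: S is the mixed-integer set, Srel its continuous relaxation,
  proj the projection onto the target variables, binary the integrality condition.\<close>
definition ideal_formulation :: "'v set \<Rightarrow> ('v::real_vector) set \<Rightarrow> ('v \<Rightarrow> 'p) \<Rightarrow> ('v \<Rightarrow> bool)
    \<Rightarrow> 'p set \<Rightarrow> bool" where
  "ideal_formulation S Srel proj isbin T \<longleftrightarrow>
     proj ` S = T \<and> (\<forall>v. v extreme_point_of Srel \<longrightarrow> isbin v)"

definition micp_relaxation :: "'v set \<Rightarrow> ('v::real_vector) set \<Rightarrow> ('v \<Rightarrow> 'p) \<Rightarrow> 'p set \<Rightarrow> bool" where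
  "micp_relaxation S Srel proj G \<longleftrightarrow> G \<subseteq> proj ` S \<and> convex Srel"

definition ext_formulation :: "bool \<Rightarrow> nat \<Rightarrow> nat \<Rightarrow> (nat \<Rightarrow> nat \<Rightarrow> real) \<Rightarrow> (nat \<Rightarrow> nat \<Rightarrow> nat)
    \<Rightarrow> (nat \<Rightarrow> nat) \<Rightarrow> nat set set \<Rightarrow> (nat set \<Rightarrow> real) \<Rightarrow> 'x set
    \<Rightarrow> ('x \<Rightarrow> nat \<Rightarrow> nat \<Rightarrow> real) \<Rightarrow> ('x \<times> (nat \<Rightarrow> real)) set
    \<Rightarrow> ('x \<times> real \<times> ((nat \<Rightarrow> nat) \<Rightarrow> real) \<times> (nat \<Rightarrow> nat \<Rightarrow> real) \<times> (nat \<Rightarrow> nat \<Rightarrow> real)) set" where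
  "ext_formulation relaxed d n a tau l II c X u W =
     {(x, mu, w, s, delta). x \<in> X \<and> (mu, w, s, delta) \<in> formulation relaxed d n a tau l II c
        \<and> (\<forall>i\<in>{1..d}. \<forall>j\<in>{0..n}. u x i j \<le> s i j)
        \<and> (x, (\<lambda>i. s i n)) \<in> W}"

end

theory Submission
  imports Defs
begin

(*
  A point of (HQ) is a probability vector w on the grid E, and s and mu are linear images of w;
  in particular Z(s)_ik is the mass of {p. k <= p_i}, so (Inc-1) confines delta_it to the interval
  between the masses of {p. tau(i,t) < p_i} and {p. tau(i,t) <= p_i}.

  A binary delta pins the support of w into a single cell H, so that the projection
  (s_.n, mu) = sum_p w_p (a(p), phi(a(p))) lies in conv {(f, phi f) | f in H}.  Conversely phi is
  affine in each coordinate, hence its graph over a cell lies in the convex hull of its values at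
  the vertices of the cell, which are grid points; their weights, together with the indicator
  delta of the cell, give a preimage.

  At an extreme point of the relaxation a fractional delta_it either lies strictly inside its
  interval, and can then be perturbed alone, or equals a fractional tail mass of w; in the latter
  case conditioning w on {p. k <= p_i} and on its complement writes the point as a proper convex
  combination of two feasible points.

  For the graph of phi o f, f(x) lies in a box [a_(i,j-1), a_(i,j)] of consecutive breakpoints;
  weights on its vertices give s_ik = a_ik for k < j and s_ik = f_i(x) otherwise, which dominates
  u(x).
*)

lemma strict_mono_on_atMost_if_Suc_less:
  fixes f :: "nat \<Rightarrow> 'a::order"
  assumes "\<And>j. j < m \<Longrightarrow> f j < f (Suc j)"
  shows "strict_mono_on {..m} f"
proof (rule strict_mono_onI)
  fix x y :: nat assume xy: "x \<in> {..m}" "y \<in> {..m}" "x < y"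
  show "f x < f y"
  proof (rule lift_Suc_mono_less_ivl[where N = "{..<m}"])
    show "\<And>j. j \<in> {..<m} \<Longrightarrow> f j < f (Suc j)"
      using assms by blast
    show "{x..<y} \<subseteq> {..<m}"
      using xy by auto
  qed (rule xy(3))
qed

lemma exists_bracketing_index:
  fixes f :: "nat \<Rightarrow> 'a::linorder"
  assumes "f 0 < v" "v \<le> f m"
  obtains k where "k \<in> {1..m}" "f (k - 1) < v" "v \<le> f k"
proof -
  define k where "k = (LEAST k. v \<le> f k)"
  have k: "v \<le> f k" "k \<le> m"
    unfolding k_def using assms(2) by (auto intro: LeastI Least_le)
  have "k \<noteq> 0"
    using k(1) assms(1) by (metis not_le)
  moreover have "\<not> v \<le> f (k - 1)"
    using not_less_Least[of "k - 1" "\<lambda>k. v \<le> f k"] \<open>k \<noteq> 0\<close> unfolding k_def by simp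
  ultimately show thesis
    using k by (intro that[of k]) (auto simp: not_le)
qed

lemma convex_comb_le:
  fixes x x' y y' \<theta> :: real
  assumes "x \<le> x'" "y \<le> y'" "0 \<le> \<theta>" "\<theta> \<le> 1"
  shows "(1 - \<theta>) * x + \<theta> * y \<le> (1 - \<theta>) * x' + \<theta> * y'"
  using assms by (intro add_mono mult_left_mono) auto

lemma real_ivl_convex_comb:
  fixes L U x :: real
  assumes "L \<le> x" "x \<le> U"
  obtains \<theta> where "0 \<le> \<theta>" "\<theta> \<le> 1" "x = (1 - \<theta>) * L + \<theta> * U"
proof -
  have "x \<in> closed_segment L U"
    using assms closed_segment_eq_real_ivl1[of L U] by simp
  then show thesis
    using that unfolding in_segment(1) by auto
qed

lemma not_extreme_point_of_convex_comb:
  assumes "x \<in> S" "y \<in> S" "x \<noteq> y" "0 < q" "q < 1"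
  shows "\<not> ((1 - q) *\<^sub>R x + q *\<^sub>R y) extreme_point_of S"
proof
  have "(1 - q) *\<^sub>R x + q *\<^sub>R y \<in> open_segment x y"
    using assms(3-5) unfolding in_segment(2) by blast
  moreover assume "((1 - q) *\<^sub>R x + q *\<^sub>R y) extreme_point_of S"
  ultimately show False
    using assms(1,2) unfolding extreme_point_of_def by blast
qed

lemma convex_sum_of_nonzero_weights:
  fixes w :: "'a \<Rightarrow> real"
  assumes "finite A" "convex C" "\<forall>p\<in>A. 0 \<le> w p" "sum w A = 1"
    and "\<And>p. p \<in> A \<Longrightarrow> w p \<noteq> 0 \<Longrightarrow> h p \<in> C"
  shows "(\<Sum>p\<in>A. w p *\<^sub>R h p) \<in> C"
proof -
  let ?S = "{p\<in>A. w p \<noteq> 0}"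
  have "sum w ?S = sum w A"
    by (rule sum.mono_neutral_left) (use assms(1) in auto)
  moreover have "(\<Sum>p\<in>?S. w p *\<^sub>R h p) = (\<Sum>p\<in>A. w p *\<^sub>R h p)"
    by (rule sum.mono_neutral_left) (use assms(1) in auto)
  ultimately show ?thesis
    using assms convex_sum[OF _ assms(2), of ?S w h] by auto
qed

lemma convex_hull_inj_image_weights:
  assumes "finite B" "inj_on h B" "y \<in> convex hull (h ` B)"
  obtains w where "\<forall>p\<in>B. 0 \<le> w p" "sum w B = 1" "y = (\<Sum>p\<in>B. w p *\<^sub>R h p)"
proof -
  obtain u where u: "\<forall>x\<in>h ` B. 0 \<le> u x" "sum u (h ` B) = 1" "(\<Sum>x\<in>h ` B. u x *\<^sub>R x) = y"
    using assms(3) unfolding convex_hull_finite[OF finite_imageI[OF assms(1)]] by blast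
  show thesis
  proof (rule that[of "u \<circ> h"])
    show "\<forall>p\<in>B. 0 \<le> (u \<circ> h) p" using u(1) by auto
    show "sum (u \<circ> h) B = 1" using u(2) sum.reindex[OF assms(2), of u] by simp
    show "y = (\<Sum>p\<in>B. (u \<circ> h) p *\<^sub>R h p)"
      using u(3) sum.reindex[OF assms(2), of "\<lambda>x. u x *\<^sub>R x"] by simp
  qed
qed

lemma sum_apply_fun: "(\<Sum>p\<in>A. f p) x = (\<Sum>p\<in>A. f p x)"
  by (induction A rule: infinite_finite_induct) auto

section \<open>Multilinear functions on boxes\<close>

lemma prod_fun_upd_convex_comb:
  fixes g :: "'a \<Rightarrow> real"
  shows "prod (g(i := (1 - \<theta>) * x + \<theta> * y)) I
       = (1 - \<theta>) * prod (g(i := x)) I + \<theta> * prod (g(i := y)) I"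
proof (cases "finite I \<and> i \<in> I")
  case True
  have "prod (g(i := v)) I = v * prod g (I - {i})" for v
  proof -
    have "prod (g(i := v)) I = v * prod (g(i := v)) (I - {i})"
      using True prod.remove[of I i "g(i := v)"] by simp
    also have "prod (g(i := v)) (I - {i}) = prod g (I - {i})"
      by (rule prod.cong) auto
    finally show ?thesis .
  qed
  then show ?thesis by (simp add: algebra_simps)
next
  case False
  have "prod (g(i := v)) I = prod g I" for v
  proof (cases "finite I")
    case True
    with False have "i \<notin> I" by blast
    then show ?thesis by (intro prod.cong) auto
  qed simp
  then show ?thesis by (simp add: algebra_simps)
qed

lemma mlin_convex_comb_coordinate:
  assumes "g i = (1 - \<theta>) * x + \<theta> * y"
  shows "mlin II c g = (1 - \<theta>) * mlin II c (g(i := x)) + \<theta> * mlin II c (g(i := y))"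
proof -
  have "g = g(i := (1 - \<theta>) * x + \<theta> * y)"
    using assms by auto
  then have *: "prod g I = (1 - \<theta>) * prod (g(i := x)) I + \<theta> * prod (g(i := y)) I" for I
    by (metis prod_fun_upd_convex_comb)
  show ?thesis
    unfolding mlin_def sum_distrib_left sum.distrib[symmetric]
    by (intro sum.cong refl) (simp only: *, simp add: algebra_simps)
qed

lemma mlin_cong:
  assumes "II \<subseteq> Pow {1..d}" "\<And>i. i \<in> {1..d} \<Longrightarrow> g i = h i"
  shows "mlin II c g = mlin II c h"
  unfolding mlin_def
proof (intro sum.cong refl arg_cong2[where f = "(*)"] prod.cong)
  fix I i assume "I \<in> II" "i \<in> I"
  then show "g i = h i"
    using assms by blast
qed

definition coord_box :: "nat \<Rightarrow> (nat \<Rightarrow> 'a::{order,zero}) \<Rightarrow> (nat \<Rightarrow> 'a) \<Rightarrow> (nat \<Rightarrow> 'a) set" where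
  "coord_box d lo hi = {g. (\<forall>i\<in>{1..d}. lo i \<le> g i \<and> g i \<le> hi i) \<and> (\<forall>i. i \<notin> {1..d} \<longrightarrow> g i = 0)}"

lemma graph_in_convex_hull_vertices:
  fixes lo hi :: "nat \<Rightarrow> real"
  assumes lohi: "\<forall>i\<in>{1..d}. lo i \<le> hi i" and g: "g \<in> coord_box d lo hi"
  shows "(g, mlin II c g) \<in> convex hull
    {(h, mlin II c h) | h. h \<in> coord_box d lo hi \<and> (\<forall>i\<in>{1..d}. h i = lo i \<or> h i = hi i)}"
    (is "_ \<in> convex hull ?V")
proof -
  \<comment> \<open>induction on the coordinates of \<open>g\<close> that are not yet at an endpoint\<close>
  have "(g, mlin II c g) \<in> convex hull ?V"
    if "finite K" "g \<in> coord_box d lo hi" "\<forall>i\<in>{1..d} - K. g i = lo i \<or> g i = hi i" for g K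
    using that
  proof (induction K arbitrary: g rule: finite_induct)
    case empty
    then show ?case
      by (intro hull_inc) auto
  next
    case (insert i K)
    show ?case
    proof (cases "i \<in> {1..d}")
      case False
      then show ?thesis
        using insert by blast
    next
      case True
      have "lo i \<le> g i" "g i \<le> hi i"
        using insert.prems(1) True by (auto simp: coord_box_def)
      then obtain \<theta> where \<theta>: "0 \<le> \<theta>" "\<theta> \<le> 1" "g i = (1 - \<theta>) * lo i + \<theta> * hi i"
        by (rule real_ivl_convex_comb)
      let ?gl = "g(i := lo i)" and ?gh = "g(i := hi i)"
      have "?gl \<in> coord_box d lo hi" "?gh \<in> coord_box d lo hi"
        using insert.prems(1) True lohi by (auto simp: coord_box_def)
      moreover have "\<forall>j\<in>{1..d} - K. ?gl j = lo j \<or> ?gl j = hi j"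
          "\<forall>j\<in>{1..d} - K. ?gh j = lo j \<or> ?gh j = hi j"
        using insert.prems(2) by auto
      ultimately have "(?gl, mlin II c ?gl) \<in> convex hull ?V" "(?gh, mlin II c ?gh) \<in> convex hull ?V"
        using insert.IH by blast+
      then have "(1 - \<theta>) *\<^sub>R (?gl, mlin II c ?gl) + \<theta> *\<^sub>R (?gh, mlin II c ?gh) \<in> convex hull ?V"
        using \<theta> by (intro convexD[OF convex_convex_hull]) auto
      moreover have "(1 - \<theta>) *\<^sub>R ?gl + \<theta> *\<^sub>R ?gh = g"
        using \<theta>(3) by (auto simp: fun_eq_iff scaleR_fun_def algebra_simps)
      ultimately show ?thesis
        using mlin_convex_comb_coordinate[where g = g and i = i, OF \<theta>(3)] by simp
    qed
  qed
  then show ?thesis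
    using g by blast
qed

definition prob_weights :: "nat \<Rightarrow> nat \<Rightarrow> ((nat \<Rightarrow> nat) \<Rightarrow> real) \<Rightarrow> bool" where
  "prob_weights d n w \<longleftrightarrow> (\<forall>p. p \<notin> gridE d n \<longrightarrow> w p = 0) \<and> (\<forall>p\<in>gridE d n. 0 \<le> w p)
     \<and> sum w (gridE d n) = 1"

definition s_of_weights :: "nat \<Rightarrow> nat \<Rightarrow> (nat \<Rightarrow> nat \<Rightarrow> real) \<Rightarrow> ((nat \<Rightarrow> nat) \<Rightarrow> real)
    \<Rightarrow> nat \<Rightarrow> nat \<Rightarrow> real" where
  "s_of_weights d n a w i k =
     (if i \<in> {1..d} \<and> k \<le> n then \<Sum>p\<in>gridE d n. a i (min k (p i)) * w p else 0)"

definition mu_of_weights :: "nat \<Rightarrow> nat \<Rightarrow> (nat \<Rightarrow> nat \<Rightarrow> real) \<Rightarrow> nat set set \<Rightarrow> (nat set \<Rightarrow> real)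
    \<Rightarrow> ((nat \<Rightarrow> nat) \<Rightarrow> real) \<Rightarrow> real" where
  "mu_of_weights d n a II c w = (\<Sum>I\<in>II. c I * (\<Sum>p\<in>gridE d n. (\<Prod>i\<in>I. a i (p i)) * w p))"

definition delta_support :: "nat \<Rightarrow> (nat \<Rightarrow> nat) \<Rightarrow> (nat \<Rightarrow> nat \<Rightarrow> real) \<Rightarrow> bool" where
  "delta_support d l \<delta> \<longleftrightarrow> (\<forall>i t. \<not> (i \<in> {1..d} \<and> t \<in> {1..l i - 1}) \<longrightarrow> \<delta> i t = 0)"

definition grid_point :: "nat \<Rightarrow> (nat \<Rightarrow> nat \<Rightarrow> real) \<Rightarrow> (nat \<Rightarrow> nat) \<Rightarrow> nat \<Rightarrow> real" where
  "grid_point d a p i = (if i \<in> {1..d} then a i (p i) else 0)"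

lemma finite_gridE [simp]: "finite (gridE d n)"
proof -
  have "gridE d n \<subseteq> (\<lambda>f i. if i \<in> {1..d} then f i else 0) ` ({1..d} \<rightarrow>\<^sub>E {0..n})"
  proof
    fix p assume p: "p \<in> gridE d n"
    have "p = (\<lambda>i. if i \<in> {1..d} then restrict p {1..d} i else 0)"
      using p by (auto simp: gridE_def fun_eq_iff)
    moreover have "restrict p {1..d} \<in> {1..d} \<rightarrow>\<^sub>E {0..n}"
      using p by (auto simp: gridE_def)
    ultimately show "p \<in> (\<lambda>f i. if i \<in> {1..d} then f i else 0) ` ({1..d} \<rightarrow>\<^sub>E {0..n})"
      by blast
  qed
  then show ?thesis
    by (rule finite_subset) (auto intro: finite_PiE)
qed

lemma gridE_le: "p \<in> gridE d n \<Longrightarrow> p i \<le> n"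
  by (cases "i \<in> {1..d}") (auto simp: gridE_def)

lemma sum_gridE_group_by_coordinate:
  "(\<Sum>j=0..n. h j * (\<Sum>p\<in>{p\<in>gridE d n. p i = j}. w p)) = (\<Sum>p\<in>gridE d n. h (p i) * (w p :: real))"
proof -
  have "(\<Sum>j=0..n. h j * (\<Sum>p\<in>{p\<in>gridE d n. p i = j}. w p))
      = (\<Sum>j=0..n. \<Sum>p\<in>{p\<in>gridE d n. p i = j}. h (p i) * w p)"
    unfolding sum_distrib_left by (auto intro!: sum.cong)
  also have "\<dots> = (\<Sum>p\<in>gridE d n. h (p i) * w p)"
    by (rule sum.group) (auto simp: gridE_le)
  finally show ?thesis .
qed

lemma formulation_iff:
  "(mu, w, s, \<delta>) \<in> formulation r d n a tau l II c \<longleftrightarrow>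
     prob_weights d n w \<and> mu = mu_of_weights d n a II c w \<and> s = s_of_weights d n a w
     \<and> Inc1 r d n tau l (Zmap a s) \<delta> \<and> delta_support d l \<delta>"
proof -
  have "HQ d n a II c mu w s \<and> var_support d n l w s \<delta> \<longleftrightarrow>
     prob_weights d n w \<and> mu = mu_of_weights d n a II c w \<and> s = s_of_weights d n a w
     \<and> delta_support d l \<delta>"
  proof
    assume hq: "HQ d n a II c mu w s \<and> var_support d n l w s \<delta>"
    have "s i k = s_of_weights d n a w i k" for i k
    proof (cases "i \<in> {1..d} \<and> k \<le> n")
      case True
      then show ?thesis
        using hq by (simp add: HQ_def s_of_weights_def sum_gridE_group_by_coordinate)
    next
      case False
      then show ?thesis
        using hq by (auto simp: var_support_def s_of_weights_def)
    qed
    then show "prob_weights d n w \<and> mu = mu_of_weights d n a II c w \<and> s = s_of_weights d n a w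
        \<and> delta_support d l \<delta>"
      using hq by (auto simp: HQ_def var_support_def prob_weights_def mu_of_weights_def
          delta_support_def)
  qed (auto simp: HQ_def var_support_def prob_weights_def mu_of_weights_def delta_support_def
      s_of_weights_def sum_gridE_group_by_coordinate)
  then show ?thesis
    unfolding formulation_def by auto
qed

lemma s_of_weights_lin:
  "s_of_weights d n a (x *\<^sub>R w1 + y *\<^sub>R w2) = x *\<^sub>R s_of_weights d n a w1 + y *\<^sub>R s_of_weights d n a w2"
  by (auto simp: fun_eq_iff s_of_weights_def scaleR_fun_def sum.distrib sum_distrib_left algebra_simps)

lemma mu_of_weights_lin:
  "mu_of_weights d n a II c (x *\<^sub>R w1 + y *\<^sub>R w2)
     = x * mu_of_weights d n a II c w1 + y * mu_of_weights d n a II c w2"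
  by (simp add: mu_of_weights_def scaleR_fun_def sum.distrib sum_distrib_left algebra_simps)

lemma prob_weights_convex_comb:
  assumes "prob_weights d n w1" "prob_weights d n w2" "0 \<le> \<theta>" "\<theta> \<le> 1"
  shows "prob_weights d n ((1 - \<theta>) *\<^sub>R w1 + \<theta> *\<^sub>R w2)"
  using assms by (auto simp: prob_weights_def scaleR_fun_def sum.distrib sum_distrib_left[symmetric])

lemma projection_eq_sum_grid_points:
  assumes "II \<subseteq> Pow {1..d}"
  shows "((\<lambda>i. s_of_weights d n a w i n), mu_of_weights d n a II c w)
       = (\<Sum>p\<in>gridE d n. w p *\<^sub>R (grid_point d a p, mlin II c (grid_point d a p)))"
proof (rule prod_eqI)
  have "s_of_weights d n a w i n = (\<Sum>p\<in>gridE d n. w p * grid_point d a p i)" for i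
    by (auto simp: s_of_weights_def grid_point_def gridE_le min_absorb2 mult.commute intro: sum.cong)
  then show "fst ((\<lambda>i. s_of_weights d n a w i n), mu_of_weights d n a II c w)
      = fst (\<Sum>p\<in>gridE d n. w p *\<^sub>R (grid_point d a p, mlin II c (grid_point d a p)))"
    by (simp add: fst_sum fun_eq_iff sum_apply_fun scaleR_fun_def)
  have "mlin II c (grid_point d a p) = mlin II c (\<lambda>i. a i (p i))" for p
    using assms by (intro mlin_cong) (auto simp: grid_point_def)
  then show "snd ((\<lambda>i. s_of_weights d n a w i n), mu_of_weights d n a II c w)
      = snd (\<Sum>p\<in>gridE d n. w p *\<^sub>R (grid_point d a p, mlin II c (grid_point d a p)))"
    by (simp add: snd_sum mu_of_weights_def mlin_def sum_distrib_left sum_distrib_right algebra_simps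
        sum.swap[of _ II])
qed

lemma s_of_weights_on_unit_step:
  assumes w: "prob_weights d n w" and i: "i \<in> {1..d}" and k: "k \<le> n"
    and supp: "\<forall>p\<in>gridE d n. w p \<noteq> 0 \<longrightarrow> j - 1 \<le> p i \<and> p i \<le> j"
  shows "s_of_weights d n a w i k = (if k < j then a i k else s_of_weights d n a w i n)"
proof (cases "k < j")
  case True
  have "a i (min k (p i)) * w p = a i k * w p" if "p \<in> gridE d n" for p
    using supp that True by (cases "w p = 0") (auto simp: min_def)
  then have "s_of_weights d n a w i k = (\<Sum>p\<in>gridE d n. a i k * w p)"
    using i k by (auto simp: s_of_weights_def intro: sum.cong)
  also have "\<dots> = a i k"
    using w by (simp add: prob_weights_def sum_distrib_left[symmetric])
  finally show ?thesis
    using True by simp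
next
  case False
  have "a i (min k (p i)) * w p = a i (min n (p i)) * w p" if "p \<in> gridE d n" for p
  proof (cases "w p = 0")
    case False
    then have "p i \<le> k"
      using supp that \<open>\<not> k < j\<close> by fastforce
    then show ?thesis
      using gridE_le[OF that, of i] by (simp add: min_absorb2)
  qed simp
  then show ?thesis
    using i k False by (auto simp: s_of_weights_def intro: sum.cong)
qed

section \<open>Tail masses and the incremental constraints\<close>

definition tail_mass :: "nat \<Rightarrow> nat \<Rightarrow> ((nat \<Rightarrow> nat) \<Rightarrow> real) \<Rightarrow> nat \<Rightarrow> nat \<Rightarrow> real" where
  "tail_mass d n w i k = sum w {p \<in> gridE d n. k \<le> p i}"

lemma tail_mass_lin:
  "tail_mass d n (x *\<^sub>R w1 + y *\<^sub>R w2) i k = x * tail_mass d n w1 i k + y * tail_mass d n w2 i k"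
  by (simp add: tail_mass_def scaleR_fun_def sum.distrib sum_distrib_left)

lemma tail_mass_compl:
  assumes "prob_weights d n w"
  shows "sum w {p \<in> gridE d n. \<not> k \<le> p i} = 1 - tail_mass d n w i k"
proof -
  have "sum w (gridE d n) = sum w ({p \<in> gridE d n. k \<le> p i} \<union> {p \<in> gridE d n. \<not> k \<le> p i})"
    by (rule arg_cong[where f = "sum w"]) auto
  also have "\<dots> = tail_mass d n w i k + sum w {p \<in> gridE d n. \<not> k \<le> p i}"
    unfolding tail_mass_def by (rule sum.union_disjoint) auto
  finally have "sum w (gridE d n) = tail_mass d n w i k + sum w {p \<in> gridE d n. \<not> k \<le> p i}" .
  then show ?thesis
    using assms by (simp add: prob_weights_def)
qed

lemma tail_mass_nonneg: "prob_weights d n w \<Longrightarrow> 0 \<le> tail_mass d n w i k"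
  by (auto simp: tail_mass_def prob_weights_def intro: sum_nonneg)

lemma tail_mass_antimono:
  assumes "prob_weights d n w" "k \<le> k'"
  shows "tail_mass d n w i k' \<le> tail_mass d n w i k"
  unfolding tail_mass_def using assms by (intro sum_mono2) (auto simp: prob_weights_def)

lemma tail_mass_0: "prob_weights d n w \<Longrightarrow> tail_mass d n w i 0 = 1"
  by (simp add: tail_mass_def prob_weights_def)

lemma tail_mass_le_1: "prob_weights d n w \<Longrightarrow> tail_mass d n w i k \<le> 1"
  using tail_mass_antimono[of d n w 0 k] tail_mass_0 by fastforce

lemma tail_mass_eq_0_iff:
  assumes "prob_weights d n w"
  shows "tail_mass d n w i k = 0 \<longleftrightarrow> (\<forall>p\<in>gridE d n. w p \<noteq> 0 \<longrightarrow> p i < k)"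
  using assms unfolding tail_mass_def prob_weights_def
  by (subst sum_nonneg_eq_0_iff) auto

lemma tail_mass_eq_1_iff:
  assumes "prob_weights d n w"
  shows "tail_mass d n w i k = 1 \<longleftrightarrow> (\<forall>p\<in>gridE d n. w p \<noteq> 0 \<longrightarrow> k \<le> p i)"
proof -
  have "tail_mass d n w i k = 1 \<longleftrightarrow> sum w {p \<in> gridE d n. \<not> k \<le> p i} = 0"
    using tail_mass_compl[OF assms] by simp
  also have "\<dots> \<longleftrightarrow> (\<forall>p\<in>gridE d n. w p \<noteq> 0 \<longrightarrow> k \<le> p i)"
    using assms unfolding prob_weights_def by (subst sum_nonneg_eq_0_iff) auto
  finally show ?thesis .
qed

lemma split_weights_at_tail:
  assumes w: "prob_weights d n w" and q: "0 < tail_mass d n w i k" "tail_mass d n w i k < 1"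
  obtains w1 w2 where "prob_weights d n w1" "prob_weights d n w2" "w1 \<noteq> w2"
    "w = (1 - tail_mass d n w i k) *\<^sub>R w2 + tail_mass d n w i k *\<^sub>R w1"
proof -
  define q where "q = tail_mass d n w i k"
  define w1 where "w1 p = (if k \<le> p i then w p / q else 0)" for p
  define w2 where "w2 p = (if k \<le> p i then 0 else w p / (1 - q))" for p
  have "sum w1 (gridE d n) = tail_mass d n w i k / q"
    unfolding w1_def tail_mass_def sum.inter_filter[OF finite_gridE] sum_divide_distrib
    by (intro sum.cong) auto
  then have "prob_weights d n w1"
    using w q by (auto simp: prob_weights_def w1_def q_def)
  moreover have "sum w2 (gridE d n) = sum w {p \<in> gridE d n. \<not> k \<le> p i} / (1 - q)"
    unfolding w2_def sum.inter_filter[OF finite_gridE] sum_divide_distrib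
    by (intro sum.cong) auto
  then have "prob_weights d n w2"
    using w q tail_mass_compl[OF w, of k i] by (auto simp: prob_weights_def w2_def q_def)
  moreover have "w1 \<noteq> w2"
  proof -
    obtain p where "p \<in> gridE d n" "w p \<noteq> 0" "k \<le> p i"
      using q(1) tail_mass_eq_0_iff[OF w, of i k] by force
    then have "w2 p \<noteq> w1 p"
      using q by (simp add: w1_def w2_def q_def)
    then show ?thesis
      by auto
  qed
  moreover have "w = (1 - q) *\<^sub>R w2 + q *\<^sub>R w1"
    using q by (auto simp: fun_eq_iff scaleR_fun_def w1_def w2_def q_def)
  ultimately show thesis
    using that unfolding q_def by blast
qed

lemma Inc1_tail_mass_iff:
  assumes "prob_weights d n w"
  shows "Inc1 r d n tau l (tail_mass d n w) \<delta> \<longleftrightarrow>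
    (\<forall>i\<in>{1..d}. \<forall>t\<in>{1..l i - 1}.
       (if r then 0 \<le> \<delta> i t \<and> \<delta> i t \<le> 1 else \<delta> i t \<in> {0, 1})
       \<and> \<delta> i t \<le> tail_mass d n w i (tau i t) \<and> tail_mass d n w i (tau i t + 1) \<le> \<delta> i t)"
  using assms tail_mass_0 tail_mass_nonneg tail_mass_antimono[OF assms]
  by (auto simp: Inc1_def)

lemma Inc1_cong:
  assumes "\<And>i k. i \<in> {1..d} \<Longrightarrow> k \<le> n \<Longrightarrow> z i k = z' i k"
    and "\<And>i t. i \<in> {1..d} \<Longrightarrow> t \<in> {1..l i - 1} \<Longrightarrow> tau i t < n"
  shows "Inc1 r d n tau l z \<delta> \<longleftrightarrow> Inc1 r d n tau l z' \<delta>"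
proof -
  have "z i k = z' i k" if "i \<in> {1..d}" "k \<le> n" for i k
    using assms(1) that .
  moreover have "z i (j - 1) = z' i (j - 1)" if "i \<in> {1..d}" "j \<in> {1..n}" for i j
    using assms(1)[of i "j - 1"] that by auto
  moreover have "z i (tau i t + 1) = z' i (tau i t + 1)" "z i (tau i t) = z' i (tau i t)"
    if "i \<in> {1..d}" "t \<in> {1..l i - 1}" for i t
    using assms that by (simp_all add: Suc_le_eq less_imp_le)
  ultimately show ?thesis
    unfolding Inc1_def by (intro ball_cong refl) simp
qed

lemma support_above_if_delta_eq_1:
  assumes w: "prob_weights d n w" and \<delta>: "Inc1 r d n tau l (tail_mass d n w) \<delta>"
    and it: "i \<in> {1..d}" "t \<in> {1..l i - 1}" and one: "\<delta> i t = 1"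
    and p: "p \<in> gridE d n" "w p \<noteq> 0"
  shows "tau i t \<le> p i"
proof -
  have "\<delta> i t \<le> tail_mass d n w i (tau i t)"
    using \<delta> it unfolding Inc1_tail_mass_iff[OF w] by blast
  then have "tail_mass d n w i (tau i t) = 1"
    using one tail_mass_le_1[OF w] by (simp add: order_antisym)
  then show ?thesis
    using p unfolding tail_mass_eq_1_iff[OF w] by blast
qed

lemma support_below_if_delta_eq_0:
  assumes w: "prob_weights d n w" and \<delta>: "Inc1 r d n tau l (tail_mass d n w) \<delta>"
    and it: "i \<in> {1..d}" "t \<in> {1..l i - 1}" and zero: "\<delta> i t = 0"
    and p: "p \<in> gridE d n" "w p \<noteq> 0"
  shows "p i \<le> tau i t"
proof -
  have "tail_mass d n w i (tau i t + 1) \<le> \<delta> i t"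
    using \<delta> it unfolding Inc1_tail_mass_iff[OF w] by blast
  then have "tail_mass d n w i (tau i t + 1) = 0"
    using zero tail_mass_nonneg[OF w] by (simp add: order_antisym)
  then show ?thesis
    using p unfolding tail_mass_eq_0_iff[OF w] by fastforce
qed

lemma Inc1_tail_mass_update:
  assumes w: "prob_weights d n w" and \<delta>: "Inc1 True d n tau l (tail_mass d n w) \<delta>"
    and x: "tail_mass d n w i (tau i t + 1) \<le> x" "x \<le> tail_mass d n w i (tau i t)"
  shows "Inc1 True d n tau l (tail_mass d n w) (\<delta>(i := (\<delta> i)(t := x)))"
  using \<delta> x tail_mass_nonneg[OF w, of i "tau i t + 1"] tail_mass_le_1[OF w, of i "tau i t"]
  unfolding Inc1_tail_mass_iff[OF w] by auto

definition cell_delta :: "nat \<Rightarrow> (nat \<Rightarrow> nat) \<Rightarrow> (nat \<Rightarrow> nat) \<Rightarrow> nat \<Rightarrow> nat \<Rightarrow> real" where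
  "cell_delta d l T i t = (if i \<in> {1..d} \<and> t \<in> {1..l i - 1} \<and> t < T i then 1 else 0)"

(* A relaxed delta_it is recorded by its relative position theta_it in the interval allowed by
   (Inc-1); for fixed theta it then depends linearly on w. *)
definition interp_delta :: "nat \<Rightarrow> nat \<Rightarrow> (nat \<Rightarrow> nat \<Rightarrow> nat) \<Rightarrow> (nat \<Rightarrow> nat) \<Rightarrow> (nat \<Rightarrow> nat \<Rightarrow> real)
    \<Rightarrow> ((nat \<Rightarrow> nat) \<Rightarrow> real) \<Rightarrow> nat \<Rightarrow> nat \<Rightarrow> real" where
  "interp_delta d n tau l \<theta> w i t =
     (if i \<in> {1..d} \<and> t \<in> {1..l i - 1}
      then (1 - \<theta> i t) * tail_mass d n w i (tau i t + 1) + \<theta> i t * tail_mass d n w i (tau i t)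
      else 0)"

lemma interp_delta_lin:
  "interp_delta d n tau l \<theta> (x *\<^sub>R w1 + y *\<^sub>R w2)
     = x *\<^sub>R interp_delta d n tau l \<theta> w1 + y *\<^sub>R interp_delta d n tau l \<theta> w2"
  unfolding fun_eq_iff interp_delta_def tail_mass_lin by (simp add: scaleR_fun_def algebra_simps)

lemma interp_delta_feasible:
  assumes w: "prob_weights d n w" and \<theta>: "\<forall>i t. 0 \<le> \<theta> i t \<and> \<theta> i t \<le> 1"
  shows "Inc1 True d n tau l (tail_mass d n w) (interp_delta d n tau l \<theta> w)"
  unfolding Inc1_tail_mass_iff[OF w]
proof (intro ballI)
  fix i t assume it: "i \<in> {1..d}" "t \<in> {1..l i - 1}"
  let ?L = "tail_mass d n w i (tau i t + 1)" and ?U = "tail_mass d n w i (tau i t)"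
  have "?L \<le> ?U" "0 \<le> ?L" "?U \<le> 1"
    using tail_mass_antimono[OF w] tail_mass_nonneg[OF w] tail_mass_le_1[OF w] by auto
  moreover have "0 \<le> \<theta> i t" "\<theta> i t \<le> 1"
    using \<theta> by auto
  then have "(1 - \<theta> i t) * ?L + \<theta> i t * ?L \<le> (1 - \<theta> i t) * ?L + \<theta> i t * ?U"
      "(1 - \<theta> i t) * ?L + \<theta> i t * ?U \<le> (1 - \<theta> i t) * ?U + \<theta> i t * ?U"
    using \<open>?L \<le> ?U\<close> by (intro convex_comb_le; simp)+
  moreover have "interp_delta d n tau l \<theta> w i t = (1 - \<theta> i t) * ?L + \<theta> i t * ?U"
    using it by (simp add: interp_delta_def)
  ultimately show "(if True then 0 \<le> interp_delta d n tau l \<theta> w i t \<and> interp_delta d n tau l \<theta> w i t \<le> 1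
        else interp_delta d n tau l \<theta> w i t \<in> {0, 1})
      \<and> interp_delta d n tau l \<theta> w i t \<le> ?U \<and> ?L \<le> interp_delta d n tau l \<theta> w i t"
    by (simp add: algebra_simps)
qed

lemma relaxed_delta_eq_interp_delta:
  assumes w: "prob_weights d n w" and \<delta>: "Inc1 True d n tau l (tail_mass d n w) \<delta>"
    and supp: "delta_support d l \<delta>"
  obtains \<theta> where "\<forall>i t. 0 \<le> \<theta> i t \<and> \<theta> i t \<le> 1" "\<delta> = interp_delta d n tau l \<theta> w"
proof -
  have "\<exists>\<theta>. 0 \<le> \<theta> \<and> \<theta> \<le> 1 \<and> \<delta> i t = interp_delta d n tau l (\<lambda>_ _. \<theta>) w i t" for i t
  proof (cases "i \<in> {1..d} \<and> t \<in> {1..l i - 1}")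
    case True
    then have "tail_mass d n w i (tau i t + 1) \<le> \<delta> i t" "\<delta> i t \<le> tail_mass d n w i (tau i t)"
      using \<delta> unfolding Inc1_tail_mass_iff[OF w] by auto
    then obtain \<theta> where "0 \<le> \<theta>" "\<theta> \<le> 1"
        "\<delta> i t = (1 - \<theta>) * tail_mass d n w i (tau i t + 1) + \<theta> * tail_mass d n w i (tau i t)"
      by (rule real_ivl_convex_comb)
    then show ?thesis
      using True by (auto simp: interp_delta_def)
  next
    case False
    then show ?thesis
      using supp by (auto simp: delta_support_def interp_delta_def)
  qed
  then obtain \<theta> where \<theta>: "\<forall>i t. 0 \<le> \<theta> i t \<and> \<theta> i t \<le> 1
      \<and> \<delta> i t = interp_delta d n tau l (\<lambda>_ _. \<theta> i t) w i t"
    by metis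
  moreover have "\<delta> = interp_delta d n tau l \<theta> w"
    using \<theta> by (auto simp: fun_eq_iff interp_delta_def)
  ultimately show thesis
    by (intro that[of \<theta>]) auto
qed

lemma Zmap_convex_comb:
  "Zmap a ((1 - \<theta>) *\<^sub>R s1 + \<theta> *\<^sub>R s2) = (1 - \<theta>) *\<^sub>R Zmap a s1 + \<theta> *\<^sub>R Zmap a s2"
  by (auto simp: fun_eq_iff Zmap_def scaleR_fun_def diff_divide_distrib add_divide_distrib algebra_simps)

lemma Inc1_relaxed_convex_comb:
  assumes "Inc1 True d n tau l z1 \<delta>1" "Inc1 True d n tau l z2 \<delta>2" "0 \<le> \<theta>" "\<theta> \<le> 1"
  shows "Inc1 True d n tau l ((1 - \<theta>) *\<^sub>R z1 + \<theta> *\<^sub>R z2) ((1 - \<theta>) *\<^sub>R \<delta>1 + \<theta> *\<^sub>R \<delta>2)"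
  using assms convex_comb_le[OF _ _ assms(3,4)] convex_comb_le[OF _ _ assms(3,4), of 0 _ 0]
    convex_comb_le[OF _ _ assms(3,4), of _ 1 _ 1]
  unfolding Inc1_def by (auto simp: scaleR_fun_def)

lemma convex_formulation_relaxed: "convex (formulation True d n a tau l II c)"
  unfolding convex_alt
proof (intro ballI allI impI)
  fix v1 v2 and \<theta> :: real
  assume v1: "v1 \<in> formulation True d n a tau l II c" and v2: "v2 \<in> formulation True d n a tau l II c"
    and \<theta>: "0 \<le> \<theta> \<and> \<theta> \<le> 1"
  obtain mu1 w1 s1 \<delta>1 where v1_eq: "v1 = (mu1, w1, s1, \<delta>1)"
    by (cases v1) auto
  obtain mu2 w2 s2 \<delta>2 where v2_eq: "v2 = (mu2, w2, s2, \<delta>2)"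
    by (cases v2) auto
  have "prob_weights d n ((1 - \<theta>) *\<^sub>R w1 + \<theta> *\<^sub>R w2)"
    using v1 v2 \<theta> prob_weights_convex_comb by (auto simp: v1_eq v2_eq formulation_iff)
  moreover have "Inc1 True d n tau l (Zmap a ((1 - \<theta>) *\<^sub>R s1 + \<theta> *\<^sub>R s2)) ((1 - \<theta>) *\<^sub>R \<delta>1 + \<theta> *\<^sub>R \<delta>2)"
    using v1 v2 \<theta> unfolding Zmap_convex_comb v1_eq v2_eq formulation_iff
    by (intro Inc1_relaxed_convex_comb) auto
  moreover have "delta_support d l ((1 - \<theta>) *\<^sub>R \<delta>1 + \<theta> *\<^sub>R \<delta>2)"
    using v1 v2 by (auto simp: v1_eq v2_eq formulation_iff delta_support_def scaleR_fun_def)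
  ultimately show "(1 - \<theta>) *\<^sub>R v1 + \<theta> *\<^sub>R v2 \<in> formulation True d n a tau l II c"
    using v1 v2 by (auto simp: v1_eq v2_eq formulation_iff s_of_weights_lin mu_of_weights_lin)
qed

lemma convex_ext_formulation_relaxed:
  assumes X: "convex X" and u: "\<forall>i\<in>{1..d}. \<forall>j\<in>{0..n}. convex_on X (\<lambda>x. u x i j)" and W: "convex W"
  shows "convex (ext_formulation True d n a tau l II c X u W)"
  unfolding convex_alt
proof (intro ballI allI impI)
  fix z1 z2 and \<theta> :: real
  assume z1: "z1 \<in> ext_formulation True d n a tau l II c X u W"
    and z2: "z2 \<in> ext_formulation True d n a tau l II c X u W" and \<theta>: "0 \<le> \<theta> \<and> \<theta> \<le> 1"
  obtain x1 v1 s1 where z1_eq: "z1 = (x1, v1)" and s1: "s1 = fst (snd (snd v1))"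
    by (cases z1) auto
  obtain x2 v2 s2 where z2_eq: "z2 = (x2, v2)" and s2: "s2 = fst (snd (snd v2))"
    by (cases z2) auto
  have x1: "x1 \<in> X" and v1: "v1 \<in> formulation True d n a tau l II c"
    and u1: "\<forall>i\<in>{1..d}. \<forall>j\<in>{0..n}. u x1 i j \<le> s1 i j" and W1: "(x1, \<lambda>i. s1 i n) \<in> W"
    using z1 unfolding z1_eq s1 ext_formulation_def by auto
  have x2: "x2 \<in> X" and v2: "v2 \<in> formulation True d n a tau l II c"
    and u2: "\<forall>i\<in>{1..d}. \<forall>j\<in>{0..n}. u x2 i j \<le> s2 i j" and W2: "(x2, \<lambda>i. s2 i n) \<in> W"
    using z2 unfolding z2_eq s2 ext_formulation_def by auto
  let ?x = "(1 - \<theta>) *\<^sub>R x1 + \<theta> *\<^sub>R x2" and ?s = "(1 - \<theta>) *\<^sub>R s1 + \<theta> *\<^sub>R s2"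
  have "?x \<in> X"
    using X x1 x2 \<theta> unfolding convex_alt by blast
  moreover have "(1 - \<theta>) *\<^sub>R v1 + \<theta> *\<^sub>R v2 \<in> formulation True d n a tau l II c"
    using convex_formulation_relaxed v1 v2 \<theta> unfolding convex_alt by blast
  moreover have "u ?x i j \<le> ?s i j" if "i \<in> {1..d}" "j \<in> {0..n}" for i j
  proof -
    have "u ?x i j \<le> (1 - \<theta>) * u x1 i j + \<theta> * u x2 i j"
      using convex_onD[OF bspec[OF bspec[OF u that(1)] that(2)]] \<theta> x1 x2 by blast
    also have "\<dots> \<le> ?s i j"
      using convex_comb_le u1 u2 that \<theta> by (simp add: scaleR_fun_def)
    finally show ?thesis .
  qed
  moreover have "(?x, \<lambda>i. ?s i n) \<in> W"
  proof -
    have "(1 - \<theta>) *\<^sub>R (x1, \<lambda>i. s1 i n) + \<theta> *\<^sub>R (x2, \<lambda>i. s2 i n) \<in> W"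
      using W W1 W2 \<theta> unfolding convex_alt by blast
    then show ?thesis
      by (simp add: scaleR_fun_def plus_fun_def)
  qed
  ultimately show "(1 - \<theta>) *\<^sub>R z1 + \<theta> *\<^sub>R z2 \<in> ext_formulation True d n a tau l II c X u W"
    unfolding z1_eq z2_eq s1 s2 ext_formulation_def by (auto simp: case_prod_beta)
qed

locale breakpoint_grid =
  fixes d n :: nat and a :: "nat \<Rightarrow> nat \<Rightarrow> real" and tau :: "nat \<Rightarrow> nat \<Rightarrow> nat" and l :: "nat \<Rightarrow> nat"
  assumes n_pos: "0 < n"
    and a_Suc_less: "\<And>i j. i \<in> {1..d} \<Longrightarrow> j < n \<Longrightarrow> a i j < a i (Suc j)"
    and tau_0: "\<And>i. i \<in> {1..d} \<Longrightarrow> tau i 0 = 0"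
    and tau_Suc_less: "\<And>i t. i \<in> {1..d} \<Longrightarrow> t < l i \<Longrightarrow> tau i t < tau i (Suc t)"
    and tau_l: "\<And>i. i \<in> {1..d} \<Longrightarrow> tau i (l i) = n"
begin

abbreviation cell :: "(nat \<Rightarrow> nat) \<Rightarrow> (nat \<Rightarrow> nat) set" where
  "cell T \<equiv> coord_box d (\<lambda>i. tau i (T i - 1)) (\<lambda>i. tau i (T i))"

lemma strict_mono_on_a: "i \<in> {1..d} \<Longrightarrow> strict_mono_on {..n} (a i)"
  by (rule strict_mono_on_atMost_if_Suc_less) (rule a_Suc_less)

lemma strict_mono_on_tau: "i \<in> {1..d} \<Longrightarrow> strict_mono_on {..l i} (tau i)"
  by (rule strict_mono_on_atMost_if_Suc_less) (rule tau_Suc_less)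

lemma a_le_iff: "i \<in> {1..d} \<Longrightarrow> j \<le> n \<Longrightarrow> k \<le> n \<Longrightarrow> a i j \<le> a i k \<longleftrightarrow> j \<le> k"
  by (simp add: strict_mono_on_less_eq[OF strict_mono_on_a])

lemma tau_le_iff: "i \<in> {1..d} \<Longrightarrow> t \<le> l i \<Longrightarrow> t' \<le> l i \<Longrightarrow> tau i t \<le> tau i t' \<longleftrightarrow> t \<le> t'"
  by (simp add: strict_mono_on_less_eq[OF strict_mono_on_tau])

lemma tau_less_iff: "i \<in> {1..d} \<Longrightarrow> t \<le> l i \<Longrightarrow> t' \<le> l i \<Longrightarrow> tau i t < tau i t' \<longleftrightarrow> t < t'"
  by (simp add: strict_mono_on_less[OF strict_mono_on_tau])

lemma tau_le_n: "i \<in> {1..d} \<Longrightarrow> t \<le> l i \<Longrightarrow> tau i t \<le> n"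
  using tau_le_iff[of i t "l i"] tau_l by simp

lemma l_pos: "i \<in> {1..d} \<Longrightarrow> 0 < l i"
  using tau_0 tau_l n_pos by (metis gr0I)

lemma tau_interior: "i \<in> {1..d} \<Longrightarrow> t \<in> {1..l i - 1} \<Longrightarrow> 0 < tau i t \<and> tau i t < n"
  using tau_less_iff[of i 0 t] tau_less_iff[of i t "l i"] tau_0 tau_l by auto

lemma inj_on_grid_point: "inj_on (grid_point d a) (gridE d n)"
proof (rule inj_onI)
  fix p q assume p: "p \<in> gridE d n" and q: "q \<in> gridE d n" and pq: "grid_point d a p = grid_point d a q"
  show "p = q"
  proof
    fix i show "p i = q i"
    proof (cases "i \<in> {1..d}")
      case True
      then have "a i (p i) = a i (q i)"
        using pq by (metis grid_point_def)
      then show ?thesis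
        using strict_mono_on_eq[OF strict_mono_on_a[OF True]] gridE_le[OF p] gridE_le[OF q]
        by simp
    next
      case False
      then show ?thesis
        using p q by (simp add: gridE_def)
    qed
  qed
qed

lemma grid_point_in_box_iff:
  assumes "p \<in> gridE d n" "\<forall>i\<in>{1..d}. lo i \<le> n \<and> hi i \<le> n"
  shows "grid_point d a p \<in> coord_box d (\<lambda>i. a i (lo i)) (\<lambda>i. a i (hi i)) \<longleftrightarrow> p \<in> coord_box d lo hi"
  using assms a_le_iff gridE_le[OF assms(1)]
  by (auto simp: coord_box_def grid_point_def gridE_def)

lemma Zmap_s_of_weights:
  assumes w: "prob_weights d n w" and i: "i \<in> {1..d}" and k: "k \<le> n"
  shows "Zmap a (s_of_weights d n a w) i k = tail_mass d n w i k"
proof (cases "k = 0")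
  case True
  then show ?thesis
    using tail_mass_0[OF w] by (simp add: Zmap_def)
next
  case False
  have step: "a i k - a i (k - 1) > 0"
    using a_Suc_less[OF i, of "k - 1"] False k by simp
  have "s_of_weights d n a w i k - s_of_weights d n a w i (k - 1)
      = (\<Sum>p\<in>gridE d n. (a i (min k (p i)) - a i (min (k - 1) (p i))) * w p)"
    using i k by (simp add: s_of_weights_def sum_subtractf left_diff_distrib)
  also have "\<dots> = (\<Sum>p\<in>gridE d n. (if k \<le> p i then (a i k - a i (k - 1)) * w p else 0))"
  proof (intro sum.cong refl)
    fix p
    have "min (k - 1) (p i) = p i" if "\<not> k \<le> p i"
      using that by auto
    then show "(a i (min k (p i)) - a i (min (k - 1) (p i))) * w p
        = (if k \<le> p i then (a i k - a i (k - 1)) * w p else 0)"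
      using False by (auto simp: min_def)
  qed
  also have "\<dots> = (a i k - a i (k - 1)) * tail_mass d n w i k"
    unfolding tail_mass_def sum.inter_filter[OF finite_gridE] sum_distrib_left
    by (intro sum.cong) auto
  finally show ?thesis
    using False step by (simp add: Zmap_def)
qed

lemma formulation_iff_tail_mass:
  "(mu, w, s, \<delta>) \<in> formulation r d n a tau l II c \<longleftrightarrow>
     prob_weights d n w \<and> mu = mu_of_weights d n a II c w \<and> s = s_of_weights d n a w
     \<and> Inc1 r d n tau l (tail_mass d n w) \<delta> \<and> delta_support d l \<delta>"
proof -
  have "Inc1 r d n tau l (Zmap a (s_of_weights d n a w)) \<delta> \<longleftrightarrow> Inc1 r d n tau l (tail_mass d n w) \<delta>"
    if "prob_weights d n w"
    using Zmap_s_of_weights[OF that] tau_interior by (intro Inc1_cong) auto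
  then show ?thesis
    unfolding formulation_iff by blast
qed

section \<open>Projection onto the union of convex hulls\<close>

lemma cell_delta_feasible:
  assumes w: "prob_weights d n w" and T: "\<forall>i\<in>{1..d}. T i \<in> {1..l i}"
    and supp: "\<forall>p\<in>gridE d n. w p \<noteq> 0 \<longrightarrow> p \<in> cell T"
  shows "Inc1 False d n tau l (tail_mass d n w) (cell_delta d l T)"
  unfolding Inc1_tail_mass_iff[OF w]
proof (intro ballI)
  fix i t assume i: "i \<in> {1..d}" and t: "t \<in> {1..l i - 1}"
  have Ti: "T i \<in> {1..l i}"
    using T i by blast
  show "(if False then 0 \<le> cell_delta d l T i t \<and> cell_delta d l T i t \<le> 1 else cell_delta d l T i t \<in> {0, 1})
      \<and> cell_delta d l T i t \<le> tail_mass d n w i (tau i t)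
      \<and> tail_mass d n w i (tau i t + 1) \<le> cell_delta d l T i t"
  proof (cases "t < T i")
    case True
    then have "tau i t \<le> tau i (T i - 1)"
      using tau_le_iff[OF i, of t "T i - 1"] t Ti by auto
    then have "tail_mass d n w i (tau i t) = 1"
      using supp i unfolding tail_mass_eq_1_iff[OF w] coord_box_def by force
    then show ?thesis
      using True i t tail_mass_le_1[OF w] by (simp add: cell_delta_def)
  next
    case False
    then have "tau i (T i) \<le> tau i t"
      using tau_le_iff[OF i, of "T i" t] t Ti by auto
    then have "tail_mass d n w i (tau i t + 1) = 0"
      using supp i unfolding tail_mass_eq_0_iff[OF w] coord_box_def by force
    then show ?thesis
      using False i t tail_mass_nonneg[OF w] by (simp add: cell_delta_def)
  qed
qed

lemma binary_delta_cell:
  assumes w: "prob_weights d n w" and \<delta>: "Inc1 False d n tau l (tail_mass d n w) \<delta>"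
  obtains T where "\<forall>i\<in>{1..d}. T i \<in> {1..l i}" "\<forall>p\<in>gridE d n. w p \<noteq> 0 \<longrightarrow> p \<in> cell T"
proof -
  define P where "P i t \<longleftrightarrow> 0 < t \<and> t \<le> l i \<and> (t = l i \<or> \<delta> i t = 0)" for i t
  define T where "T i = (LEAST t. P i t)" for i
  have PT: "P i (T i)" if "i \<in> {1..d}" for i
    unfolding T_def by (rule LeastI[of "P i" "l i"]) (use l_pos[OF that] in \<open>simp add: P_def\<close>)
  have T: "T i \<in> {1..l i}" if "i \<in> {1..d}" for i
    using PT[OF that] by (simp add: P_def)
  have "p \<in> cell T" if p: "p \<in> gridE d n" "w p \<noteq> 0" for p
  proof -
    have "tau i (T i - 1) \<le> p i" if i: "i \<in> {1..d}" for i
    proof (cases "T i = 1")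
      case True
      then show ?thesis using tau_0[OF i] by simp
    next
      case False
      then have t: "T i - 1 \<in> {1..l i - 1}"
        using T[OF i] by auto
      have "\<not> P i (T i - 1)"
        using not_less_Least[of "T i - 1" "P i"] T[OF i] False unfolding T_def by force
      moreover have "\<delta> i (T i - 1) \<in> {0, 1}"
        using \<delta> i t unfolding Inc1_tail_mass_iff[OF w] by simp
      ultimately have "\<delta> i (T i - 1) = 1"
        using t by (auto simp: P_def)
      then show ?thesis
        using support_above_if_delta_eq_1[OF w \<delta> i t _ p] by blast
    qed
    moreover have "p i \<le> tau i (T i)" if i: "i \<in> {1..d}" for i
    proof (cases "T i = l i")
      case True
      then show ?thesis using tau_l[OF i] gridE_le[OF p(1)] by simp
    next
      case False
      then have "T i \<in> {1..l i - 1}" "\<delta> i (T i) = 0"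
        using T[OF i] PT[OF i] by (auto simp: P_def)
      then show ?thesis
        using support_below_if_delta_eq_0[OF w \<delta> i _ _ p] by blast
    qed
    ultimately show ?thesis
      using p(1) by (simp add: coord_box_def gridE_def)
  qed
  then show thesis
    using that T by blast
qed

lemma cell_point_in_formulation:
  assumes w: "prob_weights d n w" and T: "\<forall>i\<in>{1..d}. T i \<in> {1..l i}"
    and supp: "\<forall>p\<in>gridE d n. w p \<noteq> 0 \<longrightarrow> p \<in> cell T"
  shows "(mu_of_weights d n a II c w, w, s_of_weights d n a w, cell_delta d l T)
    \<in> formulation False d n a tau l II c"
  using w cell_delta_feasible[OF w T supp]
  by (simp add: formulation_iff_tail_mass delta_support_def cell_delta_def)

lemma projection_in_target_set:
  assumes II: "II \<subseteq> Pow {1..d}" and v: "(mu, w, s, \<delta>) \<in> formulation False d n a tau l II c"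
  shows "((\<lambda>i. s i n), mu) \<in> target_set d a tau l II c"
proof -
  have w: "prob_weights d n w" and mu: "mu = mu_of_weights d n a II c w"
    and s: "s = s_of_weights d n a w" and \<delta>: "Inc1 False d n tau l (tail_mass d n w) \<delta>"
    using v unfolding formulation_iff_tail_mass by blast+
  obtain T where T: "\<forall>i\<in>{1..d}. T i \<in> {1..l i}" and supp: "\<forall>p\<in>gridE d n. w p \<noteq> 0 \<longrightarrow> p \<in> cell T"
    using binary_delta_cell[OF w \<delta>] .
  let ?H = "coord_box d (\<lambda>i. a i (tau i (T i - 1))) (\<lambda>i. a i (tau i (T i)))"
  have "?H \<in> boxesH d a tau l"
    using T unfolding boxesH_def coord_box_def by blast
  moreover have "grid_point d a p \<in> ?H" if "p \<in> gridE d n" "w p \<noteq> 0" for p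
    using supp that T tau_le_n by (subst grid_point_in_box_iff) auto
  then have "(\<Sum>p\<in>gridE d n. w p *\<^sub>R (grid_point d a p, mlin II c (grid_point d a p)))
      \<in> convex hull {(g, mlin II c g) | g. g \<in> ?H}"
    using w unfolding prob_weights_def
    by (intro convex_sum_of_nonzero_weights) (auto intro: hull_inc)
  ultimately show ?thesis
    unfolding target_set_def s mu projection_eq_sum_grid_points[OF II, symmetric] by blast
qed

lemma graph_box_subset_hull_grid_graph:
  assumes lohi: "\<forall>i\<in>{1..d}. lo i \<le> hi i \<and> hi i \<le> n"
  shows "{(g, mlin II c g) | g. g \<in> coord_box d (\<lambda>i. a i (lo i)) (\<lambda>i. a i (hi i))}
    \<subseteq> convex hull ((\<lambda>p. (grid_point d a p, mlin II c (grid_point d a p))) ` (gridE d n \<inter> coord_box d lo hi))"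
    (is "_ \<subseteq> convex hull (?h ` ?B)")
proof -
  let ?box = "coord_box d (\<lambda>i. a i (lo i)) (\<lambda>i. a i (hi i))"
  have vertices: "{(h, mlin II c h) | h. h \<in> ?box \<and> (\<forall>i\<in>{1..d}. h i = a i (lo i) \<or> h i = a i (hi i))}
      \<subseteq> ?h ` ?B"
  proof clarify
    fix h assume h: "h \<in> ?box" "\<forall>i\<in>{1..d}. h i = a i (lo i) \<or> h i = a i (hi i)"
    define p where "p i = (if i \<in> {1..d} then if h i = a i (lo i) then lo i else hi i else 0)" for i
    have "p \<in> ?B"
      using lohi by (auto simp: p_def gridE_def coord_box_def)
    moreover have "grid_point d a p = h"
      using h by (auto simp: fun_eq_iff p_def grid_point_def coord_box_def)
    ultimately show "(h, mlin II c h) \<in> ?h ` ?B"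
      by force
  qed
  show ?thesis
  proof clarify
    fix g assume "g \<in> ?box"
    moreover have "\<forall>i\<in>{1..d}. a i (lo i) \<le> a i (hi i)"
      using lohi a_le_iff by auto
    ultimately show "(g, mlin II c g) \<in> convex hull (?h ` ?B)"
      using graph_in_convex_hull_vertices[of d "\<lambda>i. a i (lo i)" "\<lambda>i. a i (hi i)" g II c]
        hull_mono[OF vertices, of convex] by blast
  qed
qed

lemma weights_of_hull_graph_box:
  assumes II: "II \<subseteq> Pow {1..d}" and lohi: "\<forall>i\<in>{1..d}. lo i \<le> hi i \<and> hi i \<le> n"
    and y: "y \<in> convex hull {(g, mlin II c g) | g. g \<in> coord_box d (\<lambda>i. a i (lo i)) (\<lambda>i. a i (hi i))}"
  obtains w where "prob_weights d n w" "\<forall>p\<in>gridE d n. w p \<noteq> 0 \<longrightarrow> p \<in> coord_box d lo hi"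
    "((\<lambda>i. s_of_weights d n a w i n), mu_of_weights d n a II c w) = y"
proof -
  let ?h = "\<lambda>p. (grid_point d a p, mlin II c (grid_point d a p))"
  let ?B = "gridE d n \<inter> coord_box d lo hi"
  have hull: "y \<in> convex hull (?h ` ?B)"
    using y convex_hull_subset[OF graph_box_subset_hull_grid_graph[OF lohi]] by blast
  have inj: "inj_on ?h ?B"
    using inj_onD[OF inj_on_grid_point] by (auto intro!: inj_onI)
  obtain w0 where w0: "\<forall>p\<in>?B. 0 \<le> w0 p" "sum w0 ?B = 1" "y = (\<Sum>p\<in>?B. w0 p *\<^sub>R ?h p)"
    using convex_hull_inj_image_weights[OF _ inj hull] by auto
  define w where "w p = (if p \<in> ?B then w0 p else 0)" for p
  have "sum w (gridE d n) = sum w0 ?B"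
    unfolding w_def by (rule sum.mono_neutral_cong_right) auto
  then have "prob_weights d n w"
    using w0 by (auto simp: prob_weights_def w_def)
  moreover have "\<forall>p\<in>gridE d n. w p \<noteq> 0 \<longrightarrow> p \<in> coord_box d lo hi"
    by (simp add: w_def)
  moreover have "((\<lambda>i. s_of_weights d n a w i n), mu_of_weights d n a II c w) = y"
    unfolding projection_eq_sum_grid_points[OF II] w0(3) w_def
    by (rule sum.mono_neutral_cong_right) (auto simp: zero_prod_def)
  ultimately show thesis
    using that by blast
qed

lemma target_set_subset_projection:
  assumes II: "II \<subseteq> Pow {1..d}" and y: "y \<in> target_set d a tau l II c"
  shows "y \<in> (\<lambda>(mu, w, s, \<delta>). ((\<lambda>i. s i n), mu)) ` formulation False d n a tau l II c"
proof -
  obtain T where T: "\<forall>i\<in>{1..d}. T i \<in> {1..l i}" and y: "y \<in> convex hull {(g, mlin II c g) | g.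
      g \<in> coord_box d (\<lambda>i. a i (tau i (T i - 1))) (\<lambda>i. a i (tau i (T i)))}"
    using y unfolding target_set_def boxesH_def coord_box_def by blast
  have "\<forall>i\<in>{1..d}. tau i (T i - 1) \<le> tau i (T i) \<and> tau i (T i) \<le> n"
    using T tau_le_iff tau_le_n by auto
  then obtain w where w: "prob_weights d n w" and supp: "\<forall>p\<in>gridE d n. w p \<noteq> 0 \<longrightarrow> p \<in> cell T"
    and proj: "((\<lambda>i. s_of_weights d n a w i n), mu_of_weights d n a II c w) = y"
    using weights_of_hull_graph_box[OF II _ y] by blast
  show ?thesis
    using cell_point_in_formulation[OF w T supp] proj by (force intro: rev_image_eqI)
qed

section \<open>Extreme points of the continuous relaxation\<close>

lemma not_extreme_if_delta_strictly_inside: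
  assumes v: "(mu, w, s, \<delta>) \<in> formulation True d n a tau l II c"
    and L: "tail_mass d n w i (tau i t + 1) < \<delta> i t" and U: "\<delta> i t < tail_mass d n w i (tau i t)"
  shows "\<not> (mu, w, s, \<delta>) extreme_point_of formulation True d n a tau l II c"
proof -
  have w: "prob_weights d n w" and \<delta>: "Inc1 True d n tau l (tail_mass d n w) \<delta>"
    and supp: "delta_support d l \<delta>"
    using v unfolding formulation_iff_tail_mass by blast+
  have "\<delta> i t \<noteq> 0"
    using L tail_mass_nonneg[OF w, of i "tau i t + 1"] by linarith
  then have it: "i \<in> {1..d}" "t \<in> {1..l i - 1}"
    using supp unfolding delta_support_def by blast+
  define \<epsilon> where "\<epsilon> = min (\<delta> i t - tail_mass d n w i (tau i t + 1)) (tail_mass d n w i (tau i t) - \<delta> i t)"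
  have \<epsilon>: "0 < \<epsilon>"
    using L U by (simp add: \<epsilon>_def)
  define shift where "shift x = \<delta>(i := (\<delta> i)(t := \<delta> i t + x))" for x
  have "(mu, w, s, shift x) \<in> formulation True d n a tau l II c" if "\<bar>x\<bar> \<le> \<epsilon>" for x
  proof -
    have "Inc1 True d n tau l (tail_mass d n w) (shift x)"
      unfolding shift_def using that by (intro Inc1_tail_mass_update[OF w \<delta>]) (auto simp: \<epsilon>_def)
    moreover have "delta_support d l (shift x)"
      using supp it by (auto simp: delta_support_def shift_def)
    ultimately show ?thesis
      using v by (simp add: formulation_iff_tail_mass)
  qed
  moreover have "(mu, w, s, \<delta>) = (1 - 1 / 2) *\<^sub>R (mu, w, s, shift (- \<epsilon>)) + (1 / 2) *\<^sub>R (mu, w, s, shift \<epsilon>)"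
    by (auto simp: shift_def fun_eq_iff scaleR_fun_def field_simps)
  moreover have "shift (- \<epsilon>) \<noteq> shift \<epsilon>"
    using \<epsilon> by (auto simp: shift_def fun_eq_iff)
  ultimately show ?thesis
    using \<epsilon> not_extreme_point_of_convex_comb[of "(mu, w, s, shift (- \<epsilon>))" _ "(mu, w, s, shift \<epsilon>)" "1 / 2"]
    by auto
qed

lemma not_extreme_if_tail_mass_fractional:
  assumes v: "(mu, w, s, \<delta>) \<in> formulation True d n a tau l II c"
    and q: "0 < tail_mass d n w i k" "tail_mass d n w i k < 1"
  shows "\<not> (mu, w, s, \<delta>) extreme_point_of formulation True d n a tau l II c"
proof -
  have w: "prob_weights d n w" and mu: "mu = mu_of_weights d n a II c w" and s: "s = s_of_weights d n a w"
    and \<delta>: "Inc1 True d n tau l (tail_mass d n w) \<delta>" and supp: "delta_support d l \<delta>"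
    using v unfolding formulation_iff_tail_mass by blast+
  obtain \<theta> where \<theta>: "\<forall>i t. 0 \<le> \<theta> i t \<and> \<theta> i t \<le> 1" and \<delta>_eq: "\<delta> = interp_delta d n tau l \<theta> w"
    using relaxed_delta_eq_interp_delta[OF w \<delta> supp] .
  define point where "point w' = (mu_of_weights d n a II c w', w', s_of_weights d n a w',
    interp_delta d n tau l \<theta> w')" for w'
  have point_in: "point w' \<in> formulation True d n a tau l II c" if "prob_weights d n w'" for w'
    using that interp_delta_feasible[OF that \<theta>]
    by (simp add: point_def formulation_iff_tail_mass delta_support_def interp_delta_def)
  obtain w1 w2 where w1: "prob_weights d n w1" and w2: "prob_weights d n w2" and "w1 \<noteq> w2"
    and w_eq: "w = (1 - tail_mass d n w i k) *\<^sub>R w2 + tail_mass d n w i k *\<^sub>R w1"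
    using split_weights_at_tail[OF w q] .
  have "(mu, w, s, \<delta>) = (1 - tail_mass d n w i k) *\<^sub>R point w2 + tail_mass d n w i k *\<^sub>R point w1"
    unfolding point_def mu s \<delta>_eq
    by (subst (1 2 3 4) w_eq) (simp add: s_of_weights_lin mu_of_weights_lin interp_delta_lin)
  moreover have "point w2 \<noteq> point w1"
    using \<open>w1 \<noteq> w2\<close> by (simp add: point_def)
  ultimately show ?thesis
    using not_extreme_point_of_convex_comb[OF point_in[OF w2] point_in[OF w1]] q by simp
qed

lemma extreme_point_delta_binary:
  assumes ex: "(mu, w, s, \<delta>) extreme_point_of formulation True d n a tau l II c"
  shows "delta_binary d l \<delta>"
proof -
  have v: "(mu, w, s, \<delta>) \<in> formulation True d n a tau l II c"
    using ex by (simp add: extreme_point_of_def)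
  then have w: "prob_weights d n w" and \<delta>: "Inc1 True d n tau l (tail_mass d n w) \<delta>"
    unfolding formulation_iff_tail_mass by blast+
  have "\<delta> i t \<in> {0, 1}" if it: "i \<in> {1..d}" "t \<in> {1..l i - 1}" for i t
  proof (rule ccontr)
    assume frac: "\<delta> i t \<notin> {0, 1}"
    let ?L = "tail_mass d n w i (tau i t + 1)" and ?U = "tail_mass d n w i (tau i t)"
    have bounds: "?L \<le> \<delta> i t" "\<delta> i t \<le> ?U" "0 \<le> ?L" "?U \<le> 1"
      using \<delta> it tail_mass_nonneg[OF w] tail_mass_le_1[OF w] unfolding Inc1_tail_mass_iff[OF w] by auto
    consider "?L < \<delta> i t \<and> \<delta> i t < ?U" | "\<delta> i t = ?L" | "\<delta> i t = ?U"
      using bounds by linarith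
    then show False
    proof cases
      case 1
      then show False
        using not_extreme_if_delta_strictly_inside[OF v] ex by blast
    next
      case 2
      then show False
        using not_extreme_if_tail_mass_fractional[OF v, of i "tau i t + 1"] frac bounds ex by auto
    next
      case 3
      then show False
        using not_extreme_if_tail_mass_fractional[OF v, of i "tau i t"] frac bounds ex by auto
    qed
  qed
  then show ?thesis
    by (simp add: delta_binary_def)
qed

section \<open>The graph of the composition\<close>

lemma exists_breakpoint_interval:
  assumes i: "i \<in> {1..d}" and v: "a i 0 \<le> v" "v \<le> a i n"
  obtains j where "j \<in> {1..n}" "a i (j - 1) \<le> v" "v \<le> a i j"
proof (cases "v = a i 0")
  case True
  then show thesis
    using that[of 1] n_pos a_le_iff[OF i, of 0 1] by auto
next
  case False
  then obtain j where "j \<in> {1..n}" "a i (j - 1) < v" "v \<le> a i j"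
    using exists_bracketing_index[of "a i" v n] v by force
  then show thesis
    using that by auto
qed

lemma exists_cell_containing_step:
  assumes i: "i \<in> {1..d}" and j: "j \<in> {1..n}"
  obtains t where "t \<in> {1..l i}" "tau i (t - 1) \<le> j - 1" "j \<le> tau i t"
proof -
  obtain t where "t \<in> {1..l i}" "tau i (t - 1) < j" "j \<le> tau i t"
    using exists_bracketing_index[of "tau i" j "l i"] tau_0[OF i] tau_l[OF i] j by force
  then show thesis
    using that by auto
qed

lemma weights_of_point_in_unit_cell:
  assumes II: "II \<subseteq> Pow {1..d}" and g: "\<forall>i\<in>{1..d}. a i 0 \<le> g i \<and> g i \<le> a i n"
    and g_out: "\<forall>i. i \<notin> {1..d} \<longrightarrow> g i = 0"
  obtains J w where "\<forall>i\<in>{1..d}. J i \<in> {1..n}" "prob_weights d n w"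
    "\<forall>p\<in>gridE d n. w p \<noteq> 0 \<longrightarrow> p \<in> coord_box d (\<lambda>i. J i - 1) J"
    "((\<lambda>i. s_of_weights d n a w i n), mu_of_weights d n a II c w) = (g, mlin II c g)"
proof -
  have "\<forall>i\<in>{1..d}. \<exists>j. j \<in> {1..n} \<and> a i (j - 1) \<le> g i \<and> g i \<le> a i j"
    using g exists_breakpoint_interval by metis
  then obtain J where J: "\<forall>i\<in>{1..d}. J i \<in> {1..n} \<and> a i (J i - 1) \<le> g i \<and> g i \<le> a i (J i)"
    by (rule bchoice[THEN exE])
  then have "(g, mlin II c g) \<in> convex hull {(g, mlin II c g) | g. g \<in> coord_box d (\<lambda>i. a i (J i - 1)) (\<lambda>i. a i (J i))}"
    using g_out by (intro hull_inc) (auto simp: coord_box_def)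
  moreover have "\<forall>i\<in>{1..d}. J i - 1 \<le> J i \<and> J i \<le> n"
    using J by auto
  ultimately show thesis
    using weights_of_hull_graph_box[OF II, of "\<lambda>i. J i - 1" J] that J by blast
qed

lemma graph_point_in_ext_projection:
  assumes II: "II \<subseteq> Pow {1..d}" and x: "x \<in> X"
    and f_bounds: "\<forall>i\<in>{1..d}. a i 0 \<le> f x i \<and> f x i \<le> a i n"
    and u_0: "\<forall>i\<in>{1..d}. u x i 0 = a i 0"
    and u_n: "\<forall>i\<in>{1..d}. u x i n = f x i"
    and u_le: "\<forall>i\<in>{1..d}. \<forall>j\<in>{1..n-1}. u x i j \<le> min (f x i) (a i j)"
    and W: "(x, (\<lambda>i. if i \<in> {1..d} then f x i else 0)) \<in> W"
  shows "(x, mlin II c (f x)) \<in> (\<lambda>(x, mu, w, s, \<delta>). (x, mu)) ` ext_formulation False d n a tau l II c X u W"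
proof -
  define g where "g = (\<lambda>i. if i \<in> {1..d} then f x i else 0)"
  have g: "\<forall>i\<in>{1..d}. a i 0 \<le> g i \<and> g i \<le> a i n" "\<forall>i. i \<notin> {1..d} \<longrightarrow> g i = 0"
    using f_bounds by (simp_all add: g_def)
  obtain J w where J: "\<forall>i\<in>{1..d}. J i \<in> {1..n}" and w: "prob_weights d n w"
    and supp: "\<forall>p\<in>gridE d n. w p \<noteq> 0 \<longrightarrow> p \<in> coord_box d (\<lambda>i. J i - 1) J"
    and proj: "((\<lambda>i. s_of_weights d n a w i n), mu_of_weights d n a II c w) = (g, mlin II c g)"
    using weights_of_point_in_unit_cell[OF II g] by blast
  have "\<forall>i\<in>{1..d}. \<exists>t. t \<in> {1..l i} \<and> tau i (t - 1) \<le> J i - 1 \<and> J i \<le> tau i t"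
    using J exists_cell_containing_step by metis
  then obtain T where T: "\<forall>i\<in>{1..d}. T i \<in> {1..l i} \<and> tau i (T i - 1) \<le> J i - 1 \<and> J i \<le> tau i (T i)"
    by (rule bchoice[THEN exE])
  have "\<forall>p\<in>gridE d n. w p \<noteq> 0 \<longrightarrow> p \<in> cell T"
    using supp T by (fastforce simp: coord_box_def)
  then have v: "(mu_of_weights d n a II c w, w, s_of_weights d n a w, cell_delta d l T)
      \<in> formulation False d n a tau l II c"
    using T by (intro cell_point_in_formulation[OF w]) auto
  have "mlin II c g = mlin II c (f x)"
    using II by (intro mlin_cong) (auto simp: g_def)
  then have mu: "mu_of_weights d n a II c w = mlin II c (f x)"
    using proj by simp
  have u_le_s: "u x i k \<le> s_of_weights d n a w i k" if i: "i \<in> {1..d}" and k: "k \<in> {0..n}" for i k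
  proof -
    have "\<forall>p\<in>gridE d n. w p \<noteq> 0 \<longrightarrow> J i - 1 \<le> p i \<and> p i \<le> J i"
      using supp i by (auto simp: coord_box_def)
    then have "s_of_weights d n a w i k = (if k < J i then a i k else f x i)"
      using s_of_weights_on_unit_step[OF w i, of k "J i"] proj i k by (auto simp: g_def fun_eq_iff)
    moreover have "J i \<in> {1..n}"
      using J i by blast
    ultimately show ?thesis
      using u_0 u_n u_le i k by (cases "k = 0 \<or> k = n") auto
  qed
  have "(x, \<lambda>i. s_of_weights d n a w i n) \<in> W"
    using W proj by (simp add: g_def)
  then have "(x, mu_of_weights d n a II c w, w, s_of_weights d n a w, cell_delta d l T)
      \<in> ext_formulation False d n a tau l II c X u W"
    using x v u_le_s by (simp add: ext_formulation_def)
  then show ?thesis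
    using mu by (force intro: rev_image_eqI)
qed

end

theorem corollary4p7:
  fixes d n :: nat
    and a :: "nat \<Rightarrow> nat \<Rightarrow> real"
    and tau :: "nat \<Rightarrow> nat \<Rightarrow> nat" and l :: "nat \<Rightarrow> nat"
    and II :: "nat set set" and c :: "nat set \<Rightarrow> real"
    and X :: "'x::euclidean_space set"
    and f :: "'x \<Rightarrow> nat \<Rightarrow> real"
    and u :: "'x \<Rightarrow> nat \<Rightarrow> nat \<Rightarrow> real"
    and W :: "('x \<times> (nat \<Rightarrow> real)) set"
  assumes "1 \<le> d" and "1 \<le> n"
    and a_mono: "\<forall>i\<in>{1..d}. \<forall>j<n. a i j < a i (Suc j)"
    and tau_0: "\<forall>i\<in>{1..d}. tau i 0 = 0"
    and tau_mono: "\<forall>i\<in>{1..d}. \<forall>t<l i. tau i t < tau i (Suc t)"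
    and tau_l: "\<forall>i\<in>{1..d}. tau i (l i) = n"
    and II_sub: "II \<subseteq> Pow {1..d}"
    and f_bounds: "\<forall>x\<in>X. \<forall>i\<in>{1..d}. a i 0 \<le> f x i \<and> f x i \<le> a i n"
    and X_convex: "convex X"
    and u_convex: "\<forall>i\<in>{1..d}. \<forall>j\<in>{0..n}. convex_on X (\<lambda>x. u x i j)"
    and u_0: "\<forall>x\<in>X. \<forall>i\<in>{1..d}. u x i 0 = a i 0"
    and u_n: "\<forall>x\<in>X. \<forall>i\<in>{1..d}. u x i n = f x i"
    and u_le: "\<forall>x\<in>X. \<forall>i\<in>{1..d}. \<forall>j\<in>{1..n-1}. u x i j \<le> min (f x i) (a i j)"
    and W_convex: "convex W"
    and W_graph: "{(x, (\<lambda>i. if i \<in> {1..d} then f x i else 0)) | x. x \<in> X} \<subseteq> W"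
  shows "ideal_formulation
           (formulation False d n a tau l II c) (formulation True d n a tau l II c)
           (\<lambda>(mu, w, s, delta). ((\<lambda>i. s i n), mu))
           (\<lambda>(mu, w, s, delta). delta_binary d l delta)
           (target_set d a tau l II c)
       \<and> micp_relaxation
           (ext_formulation False d n a tau l II c X u W) (ext_formulation True d n a tau l II c X u W)
           (\<lambda>(x, mu, w, s, delta). (x, mu))
           {(x, mlin II c (f x)) | x. x \<in> X}"
proof -
  interpret breakpoint_grid d n a tau l
    using assms(2) a_mono tau_0 tau_mono tau_l by unfold_locales auto
  have "(\<lambda>(mu, w, s, \<delta>). ((\<lambda>i. s i n), mu)) ` formulation False d n a tau l II c
      = target_set d a tau l II c"
    using projection_in_target_set[OF II_sub] target_set_subset_projection[OF II_sub] by auto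
  moreover have "\<forall>v. v extreme_point_of formulation True d n a tau l II c
      \<longrightarrow> (\<lambda>(mu, w, s, \<delta>). delta_binary d l \<delta>) v"
    using extreme_point_delta_binary by fastforce
  moreover have "(x, mlin II c (f x)) \<in> (\<lambda>(x, mu, w, s, \<delta>). (x, mu)) `
      ext_formulation False d n a tau l II c X u W" if "x \<in> X" for x
    using that f_bounds u_0 u_n u_le W_graph
    by (intro graph_point_in_ext_projection[OF II_sub that]) auto
  moreover have "convex (ext_formulation True d n a tau l II c X u W)"
    using convex_ext_formulation_relaxed[OF X_convex u_convex W_convex] .
  ultimately show ?thesis
    unfolding ideal_formulation_def micp_relaxation_def by blast
qed

end
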